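(* Assume the setting in the context (deterministic $\Phi$ with $\operatorname{rank}(\widehat\Phi_1)=k$). Let $\theta_1\le\dots\le\theta_k$ be the principal angles between $\mathcal R(Q)$ and $\mathcal R(U_k)$, and $\varphi_1\le\dots\le\varphi_k$ the principal angles between $\mathcal R(P)$ and $\mathcal R(V_k)$. Then for $i=1,\dots,k$, $$\sin\theta_i\le\frac{\delta_i^{2q+2}\|\widehat\Phi_2\widehat\Phi_1^\dagger\|_2}{\sqrt{1+\delta_i^{4q+4}\|\widehat\Phi_2\widehat\Phi_1^\dagger\|_2^2}},\qquad \sin\varphi_i\le\frac{\delta_i^{2q+1}\|\widehat\Phi_2\widehat\Phi_1^\dagger\|_2}{\sqrt{1+\delta_i^{4q+2}\|\widehat\Phi_2\widehat\Phi_1^\dagger\|_2^2}}.$$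
   Context: Let $A\in\mathbb R^{m\times n}$ with $m\ge n$ have full SVD $A=U\Sigma V^T$, with singular values $\sigma_1\ge\sigma_2\ge\dots\ge\sigma_n\ge 0$. Fix an integer $k\ge1$ with $\sigma_k>0$ (the paper regards $A$ as having numerical rank $k$, i.e. $\sigma_k$ well separated from $\sigma_{k+1}$). Write $U=[U_k\ U_\perp]$ with $U_k\in\mathbb R^{m\times k}$ the first $k$ left singular vectors $u_1,\dots,u_k$, $U_\perp\in\mathbb R^{m\times(m-k)}$ the rest; $V=[V_k\ V_\perp]$ with $V_k\in\mathbb R^{n\times k}$ the first $k$ right singular vectors $v_1,\dots,v_k$; $\Sigma_k=\mathrm{diag}(\sigma_1,\dots,\sigma_k)$ and $\Sigma_\perp$ the remaining diagonal block of $\Sigma$ containing $\sigma_{k+1},\dots,\sigma_n$ (so $\|\Sigma_\perp\|_2=\sigma_{k+1}$, $\|\Sigma_\perp\|_F=(\sum_{i>k}\sigma_i^2)^{1/2}$). The notation $\|\cdot\|_{2,F}$ means the statement holds for both the spectral and Frobenius norm. Let $p\ge1$ be an oversampling integer, $d=k+p<n$, and $q\ge0$ an integer (power-iteration parameter). RU-QLP (Randomized Unpivoted QLP): given $\Phi\in\mathbb R^{m\times d}$, let $\bar P\in\mathbb R^{n\times d}$ have orthonormal columns spanning the range of $(A^TA)^qA^T\Phi$ (assumed of rank $d$); compute the thin unpivoted QR factorization $A\bar P=QR$ with $Q\in\mathbb R^{m\times d}$ having orthonormal columns and $R\in\mathbb R^{d\times d}$ upper triangular; compute the thin unpivoted QR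 factorization $R^T=\widetilde P\widetilde R$; set $P=\bar P\widetilde P\in\mathbb R^{n\times d}$ and $L=\widetilde R^T$ (lower triangular), giving $\hat A=QLP^T$. Partition $R=\begin{bmatrix}R_{11}&R_{12}\\0&R_{22}\end{bmatrix}$ and $L=\begin{bmatrix}L_{11}&0\\L_{21}&L_{22}\end{bmatrix}$ with $R_{11},L_{11}\in\mathbb R^{k\times k}$. Define $\widehat\Phi_1=U_k^T\Phi\in\mathbb R^{k\times d}$ and $\widehat\Phi_2=U_\perp^T\Phi\in\mathbb R^{(m-k)\times d}$, assume $\widehat\Phi_1$ has rank $k$, and let $\dagger$ denote the Moore–Penrose inverse. Set $\delta_i=\sigma_{k+1}/\sigma_i$ for $i=1,\dots,k$ and $\gamma=\sigma_n/\sigma_1$. Principal angles between a subspace $\mathcal X$ and a $k$-dimensional subspace $\mathcal Y$ (with $\dim\mathcal X\ge k$) are the $k$ canonical angles $0\le\alpha_1\le\dots\le\alpha_k\le\pi/2$; for orthonormal bases $X$, $Y$, the values $\sin\alpha_i$ are the singular values of $(I-XX^T)Y$. *)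

theory Defs
  imports "HOL-Analysis.Analysis" "Jordan_Normal_Form.DL_Rank"
begin

definition vnorm :: "real vec \<Rightarrow> real" where
  "vnorm x = sqrt (x \<bullet> x)"

definition norm2 :: "real mat \<Rightarrow> real" where
  "norm2 M = Sup {vnorm (M *\<^sub>v x) | x. x \<in> carrier_vec (dim_col M) \<and> vnorm x \<le> 1}"

definition range_mat :: "real mat \<Rightarrow> real vec set" where
  "range_mat M = {M *\<^sub>v x | x. x \<in> carrier_vec (dim_col M)}"

definition orth_cols :: "real mat \<Rightarrow> bool" where
  "orth_cols M \<longleftrightarrow> transpose_mat M * M = 1\<^sub>m (dim_col M)"

definition orthogonal_mat :: "real mat \<Rightarrow> bool" where
  "orthogonal_mat M \<longleftrightarrow> dim_row M = dim_col M \<and> orth_cols M"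

definition is_pinv :: "real mat \<Rightarrow> real mat \<Rightarrow> bool" where
  "is_pinv M X \<longleftrightarrow> X \<in> carrier_mat (dim_col M) (dim_row M) \<and>
     M * X * M = M \<and> X * M * X = X \<and>
     transpose_mat (M * X) = M * X \<and> transpose_mat (X * M) = X * M"

definition pinv :: "real mat \<Rightarrow> real mat" where
  "pinv M = (THE X. is_pinv M X)"

definition is_svd :: "real mat \<Rightarrow> real mat \<Rightarrow> real mat \<Rightarrow> real mat \<Rightarrow> bool" where
  "is_svd M U S V \<longleftrightarrow>
     U \<in> carrier_mat (dim_row M) (dim_row M) \<and> orthogonal_mat U \<and>
     V \<in> carrier_mat (dim_col M) (dim_col M) \<and> orthogonal_mat V \<and>
     S \<in> carrier_mat (dim_row M) (dim_col M) \<and>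
     (\<forall>i<dim_row M. \<forall>j<dim_col M. i \<noteq> j \<longrightarrow> S $$ (i,j) = 0) \<and>
     (\<forall>i<min (dim_row M) (dim_col M). S $$ (i,i) \<ge> 0) \<and>
     (\<forall>i j. i \<le> j \<longrightarrow> j < min (dim_row M) (dim_col M) \<longrightarrow> S $$ (j,j) \<le> S $$ (i,i)) \<and>
     M = U * S * transpose_mat V"

definition singular_values_desc :: "real mat \<Rightarrow> (nat \<Rightarrow> real) \<Rightarrow> bool" where
  "singular_values_desc M s \<longleftrightarrow>
     (\<exists>U S V. is_svd M U S V \<and> (\<forall>i<min (dim_row M) (dim_col M). s i = S $$ (i,i)))"

(* Principal angles between range(X) (X orthonormal columns) and the k-dim range(Y)
   (Y orthonormal columns, k = dim_col Y): t i = sin(alpha_(i+1)), with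
   alpha_1 \<le> ... \<le> alpha_k, i.e. the singular values of (I - X X^T) Y in
   nondecreasing order. *)
definition principal_angle_sines :: "real mat \<Rightarrow> real mat \<Rightarrow> (nat \<Rightarrow> real) \<Rightarrow> bool" where
  "principal_angle_sines X Y t \<longleftrightarrow>
     (\<exists>s. singular_values_desc ((1\<^sub>m (dim_row X) - X * transpose_mat X) * Y) s \<and>
          (\<forall>i<dim_col Y. t i = s (dim_col Y - 1 - i)))"

definition cols_first :: "nat \<Rightarrow> real mat \<Rightarrow> real mat" where
  "cols_first k M = mat (dim_row M) k (\<lambda>(i,j). M $$ (i,j))"

definition cols_rest :: "nat \<Rightarrow> real mat \<Rightarrow> real mat" where
  "cols_rest k M = mat (dim_row M) (dim_col M - k) (\<lambda>(i,j). M $$ (i,j+k))"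

end

theory Submission
  imports Defs
begin

text \<open>Write a unit vector of \<open>range_mat (cols_first k U)\<close> as \<open>U\<^sub>k x\<close>. The sketch
  \<open>W = (A\<^sup>T A)\<^sup>q A\<^sup>T Phi\<close> sends \<open>z\<close> to \<open>V \<Sigma>\<^sup>2\<^sup>q\<^sup>+\<^sup>1 U\<^sup>T Phi z\<close>, and \<open>A W z = U \<Sigma>\<^sup>2\<^sup>q\<^sup>+\<^sup>2 U\<^sup>T Phi z\<close>; these
  vectors lie in the range of \<open>P\<close> and of \<open>Q\<close>, respectively. Taking \<open>z = Phi1\<^sup>\<dagger> \<Sigma>\<^sub>k\<^sup>-\<^sup>e x\<close>
  makes the leading \<open>k\<close> coordinates of \<open>\<Sigma>\<^sup>e U\<^sup>T Phi z\<close> equal to \<open>x\<close>, and if \<open>x\<close> is supported on the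
  first \<open>i\<close> coordinates, the trailing ones have norm at most \<open>\<tau> \<parallel>x\<parallel>\<close> with
  \<open>\<tau> = (\<sigma>\<^sub>k\<^sub>+\<^sub>1/\<sigma>\<^sub>i)\<^sup>e \<parallel>Phi2 Phi1\<^sup>\<dagger>\<parallel>\<close>. Shrinking this vector by \<open>1/(1 + \<tau>\<^sup>2)\<close> puts it within
  \<open>\<tau>/\<surd>(1 + \<tau>\<^sup>2)\<close> of \<open>U\<^sub>k x\<close>, so the residual \<open>(I - Q Q\<^sup>T) U\<^sub>k\<close> is bounded by that amount on an
  \<open>i\<close>-dimensional subspace, and the min-max principle bounds the \<open>i\<close>-th smallest singular value.\<close>

section \<open>Euclidean norm and orthonormal columns\<close>

lemma scalar_prod_self_nonneg: "(x::real vec) \<bullet> x \<ge> 0"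
  unfolding scalar_prod_def by (auto intro: sum_nonneg)

lemma scalar_prod_self_eq_sum_squares: "(x::real vec) \<bullet> x = (\<Sum>i<dim_vec x. (x$i)^2)"
  unfolding scalar_prod_def by (auto intro!: sum.cong simp: power2_eq_square lessThan_atLeast0)

lemma vnorm_nonneg: "vnorm x \<ge> 0"
  unfolding vnorm_def using scalar_prod_self_nonneg by simp

lemma abs_vec_index_le_vnorm: "t < dim_vec v \<Longrightarrow> \<bar>v $ t\<bar> \<le> vnorm v"
proof -
  assume t: "t < dim_vec v"
  have "(v$t)^2 \<le> (\<Sum>i<dim_vec v. (v$i)^2)" using t by (intro member_le_sum) auto
  then have "sqrt ((v$t)^2) \<le> sqrt (v \<bullet> v)"
    using scalar_prod_self_eq_sum_squares[of v] by (intro real_sqrt_le_mono) simp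
  then show ?thesis unfolding vnorm_def real_sqrt_abs .
qed

lemma vnorm_smult: "vnorm (c \<cdot>\<^sub>v v) = \<bar>c\<bar> * vnorm (v::real vec)"
proof -
  have "(c \<cdot>\<^sub>v v) \<bullet> (c \<cdot>\<^sub>v v) = c^2 * (v \<bullet> v)"
    by (simp add: power2_eq_square)
  then show ?thesis unfolding vnorm_def by (simp add: real_sqrt_mult)
qed

lemma vnorm_eq_0_iff: "vnorm v = 0 \<longleftrightarrow> v = 0\<^sub>v (dim_vec (v::real vec))"
proof
  assume "vnorm v = 0"
  then have "\<forall>t<dim_vec v. v $ t = 0" using abs_vec_index_le_vnorm by fastforce
  then show "v = 0\<^sub>v (dim_vec v)" by (intro eq_vecI) auto
next
  assume "v = 0\<^sub>v (dim_vec v)"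
  then have "v \<bullet> v = 0" by (metis carrier_vec_dim_vec scalar_prod_left_zero)
  then show "vnorm v = 0" unfolding vnorm_def by simp
qed

lemma mult_mat_vec_index_sum:
  "i < dim_row A \<Longrightarrow> dim_vec v = dim_col A \<Longrightarrow> (A *\<^sub>v v) $ i = (\<Sum>t<dim_col A. A $$ (i,t) * v $ t)"
  by (simp add: scalar_prod_def lessThan_atLeast0)

lemma orth_cols_transpose_mult_mult_vec:
  assumes U: "U \<in> carrier_mat a b" and o: "orth_cols U" and x: "x \<in> carrier_vec b"
  shows "transpose_mat U *\<^sub>v (U *\<^sub>v x) = x"
  using o U x unfolding orth_cols_def
  by (metis assoc_mult_mat_vec carrier_matD(2) one_mult_mat_vec transpose_carrier_mat)

lemma orth_cols_scalar_prod_mult_vec: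
  assumes U: "U \<in> carrier_mat a b" and o: "orth_cols U" and x: "x \<in> carrier_vec b"
  shows "(U *\<^sub>v x) \<bullet> (U *\<^sub>v x) = x \<bullet> (x::real vec)"
  using transpose_vec_mult_scalar[OF U x, of "U *\<^sub>v x"] U x
  by (simp add: orth_cols_transpose_mult_mult_vec[OF U o x])

lemma orthogonal_mult_transpose:
  assumes U: "U \<in> carrier_mat a a" and o: "orth_cols U"
  shows "U * transpose_mat U = 1\<^sub>m a"
  using mat_mult_left_right_inverse[of "transpose_mat U" a U] U o unfolding orth_cols_def by auto

lemma orthogonal_mult_transpose_mult_vec:
  assumes U: "U \<in> carrier_mat a a" and o: "orth_cols U" and x: "x \<in> carrier_vec a"
  shows "U *\<^sub>v (transpose_mat U *\<^sub>v x) = x"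
  using orthogonal_mult_transpose[OF U o] U x
  by (metis assoc_mult_mat_vec one_mult_mat_vec transpose_carrier_mat)

lemma orth_cols_mult:
  assumes P: "P \<in> carrier_mat a b" and Po: "orth_cols P"
    and T: "T \<in> carrier_mat b c" and To: "orth_cols T"
  shows "orth_cols (P * T)"
proof -
  have Pt: "transpose_mat P \<in> carrier_mat b a" and Tt: "transpose_mat T \<in> carrier_mat c b"
    using P T by auto
  have "transpose_mat (P * T) * (P * T) = transpose_mat T * (transpose_mat P * (P * T))"
    unfolding transpose_mult[OF P T] using Pt Tt P T by (intro assoc_mult_mat) auto
  also have "transpose_mat P * (P * T) = T"
    using Po P T unfolding orth_cols_def by (simp add: assoc_mult_mat[OF Pt P T, symmetric])
  finally show ?thesis using To T unfolding orth_cols_def by simp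
qed

lemma range_mat_subset_mult_orthogonal:
  assumes P: "P \<in> carrier_mat a b" and T: "T \<in> carrier_mat b b" and To: "orth_cols T"
  shows "range_mat P \<subseteq> range_mat (P * T)"
proof
  fix w assume "w \<in> range_mat P"
  then obtain v where v: "v \<in> carrier_vec b" "w = P *\<^sub>v v" using P unfolding range_mat_def by auto
  have "w = (P * T) *\<^sub>v (transpose_mat T *\<^sub>v v)"
    using v P T orthogonal_mult_transpose_mult_vec[OF T To v(1)] by (simp add: assoc_mult_mat_vec)
  then show "w \<in> range_mat (P * T)" unfolding range_mat_def using T v(1) by auto
qed

lemma smult_mem_range_mat:
  assumes X: "X \<in> carrier_mat a b" and w: "w \<in> range_mat X"
  shows "c \<cdot>\<^sub>v w \<in> range_mat X"
proof -
  obtain v where v: "v \<in> carrier_vec b" "w = X *\<^sub>v v" using w X unfolding range_mat_def by auto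
  then have "c \<cdot>\<^sub>v w = X *\<^sub>v (c \<cdot>\<^sub>v v)" using mult_mat_vec[OF X v(1)] by simp
  then show ?thesis unfolding range_mat_def using v(1) X by auto
qed

lemma orth_proj_residual_le:
  assumes Q: "Q \<in> carrier_mat m d" and o: "orth_cols Q" and u: "u \<in> carrier_vec m"
    and w: "w \<in> range_mat Q"
  shows "vnorm ((1\<^sub>m m - Q * transpose_mat Q) *\<^sub>v u) \<le> vnorm (u - (w::real vec))"
proof -
  from w Q obtain v where v: "v \<in> carrier_vec d" and wv: "w = Q *\<^sub>v v"
    unfolding range_mat_def by auto
  define a where "a = u - w"
  have a: "a \<in> carrier_vec m" using u wv Q v a_def by auto
  have Qt: "transpose_mat Q \<in> carrier_mat d m" using Q by auto
  define b where "b = transpose_mat Q *\<^sub>v a"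
  have b: "b \<in> carrier_vec d" using b_def Qt a by auto
  have u_eq: "u = a + Q *\<^sub>v v" unfolding a_def wv using u Q v by (intro eq_vecI) auto
  have "(1\<^sub>m m - Q * transpose_mat Q) *\<^sub>v u = u - Q *\<^sub>v (transpose_mat Q *\<^sub>v u)"
    using Q u by (simp add: minus_mult_distrib_mat_vec[of _ m m])
  also have "transpose_mat Q *\<^sub>v u = b + v"
    unfolding u_eq b_def using Qt a Q v orth_cols_transpose_mult_mult_vec[OF Q o v]
    by (simp add: mult_add_distrib_mat_vec[OF Qt])
  also have "u - Q *\<^sub>v (b + v) = a - Q *\<^sub>v b"
    unfolding u_eq using Q a b v by (auto simp: mult_add_distrib_mat_vec[of _ m d])
  finally have e: "(1\<^sub>m m - Q * transpose_mat Q) *\<^sub>v u = a - Q *\<^sub>v b" .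
  have ab: "a \<bullet> (Q *\<^sub>v b) = b \<bullet> b"
    using transpose_vec_mult_scalar[OF Q b a] b_def comm_scalar_prod[OF b b] by simp
  have "(a - Q *\<^sub>v b) \<bullet> (a - Q *\<^sub>v b) = a \<bullet> a - 2 * (a \<bullet> (Q *\<^sub>v b)) + (Q *\<^sub>v b) \<bullet> (Q *\<^sub>v b)"
    using a Q b
    by (simp add: minus_scalar_prod_distrib[of _ m] scalar_prod_minus_distrib[of _ m]
        comm_scalar_prod[of "Q *\<^sub>v b" m a])
  also have "\<dots> = a \<bullet> a - b \<bullet> b" using ab orth_cols_scalar_prod_mult_vec[OF Q o b] by simp
  also have "\<dots> \<le> a \<bullet> a" using scalar_prod_self_nonneg[of b] by simp
  finally show ?thesis unfolding vnorm_def e a_def by simp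
qed

section \<open>Spectral norm\<close>

lemma norm2_bdd_above:
  assumes M: "(M::real mat) \<in> carrier_mat a b"
  shows "bdd_above {vnorm (M *\<^sub>v x) | x. x \<in> carrier_vec (dim_col M) \<and> vnorm x \<le> 1}"
proof -
  define C where "C = sqrt (\<Sum>i<a. (\<Sum>t<b. \<bar>M $$ (i,t)\<bar>)^2)"
  have C: "vnorm (M *\<^sub>v x) \<le> C" if x: "x \<in> carrier_vec b" "vnorm x \<le> 1" for x
  proof -
    have row_bound: "\<bar>(M *\<^sub>v x) $ i\<bar> \<le> (\<Sum>t<b. \<bar>M $$ (i,t)\<bar>)" if i: "i < a" for i
    proof -
      have "\<bar>(M *\<^sub>v x) $ i\<bar> \<le> (\<Sum>t<b. \<bar>M $$ (i,t) * x $ t\<bar>)"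
        using mult_mat_vec_index_sum[of i M x] M x i by (auto intro: sum_abs)
      also have "\<dots> \<le> (\<Sum>t<b. \<bar>M $$ (i,t)\<bar>)"
      proof (intro sum_mono)
        fix t assume t: "t \<in> {..<b}"
        have "\<bar>x $ t\<bar> \<le> 1" using abs_vec_index_le_vnorm[of t x] x t by auto
        then show "\<bar>M $$ (i,t) * x $ t\<bar> \<le> \<bar>M $$ (i,t)\<bar>"
          by (simp add: abs_mult mult_left_le)
      qed
      finally show ?thesis .
    qed
    have "(M *\<^sub>v x) \<bullet> (M *\<^sub>v x) = (\<Sum>i<a. ((M *\<^sub>v x) $ i)^2)"
      using scalar_prod_self_eq_sum_squares[of "M *\<^sub>v x"] M by simp
    also have "\<dots> \<le> (\<Sum>i<a. (\<Sum>t<b. \<bar>M $$ (i,t)\<bar>)^2)"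
      using row_bound by (intro sum_mono) (metis abs_ge_zero lessThan_iff power2_abs power_mono)
    finally show ?thesis unfolding vnorm_def C_def by simp
  qed
  show ?thesis using M C by (intro bdd_aboveI[where M = C]) auto
qed

lemma norm2_ge:
  assumes M: "(M::real mat) \<in> carrier_mat a b" and x: "x \<in> carrier_vec b" and n: "vnorm x \<le> 1"
  shows "vnorm (M *\<^sub>v x) \<le> norm2 M"
  unfolding norm2_def using M x n by (intro cSup_upper norm2_bdd_above[OF M]) auto

lemma norm2_nonneg:
  assumes M: "(M::real mat) \<in> carrier_mat a b"
  shows "norm2 M \<ge> 0"
proof -
  have "M *\<^sub>v 0\<^sub>v b = 0\<^sub>v a" using M by auto
  then show ?thesis
    using norm2_ge[OF M zero_carrier_vec[of b]] vnorm_eq_0_iff[of "0\<^sub>v a"] vnorm_eq_0_iff[of "0\<^sub>v b"]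
    by simp
qed

lemma vnorm_mult_vec_le_norm2:
  assumes M: "(M::real mat) \<in> carrier_mat a b" and x: "x \<in> carrier_vec b"
  shows "vnorm (M *\<^sub>v x) \<le> norm2 M * vnorm x"
proof (cases "vnorm x = 0")
  case True
  then have "M *\<^sub>v x = 0\<^sub>v a" using vnorm_eq_0_iff[of x] M x by auto
  then show ?thesis using True vnorm_eq_0_iff[of "0\<^sub>v a"] by simp
next
  case False
  define c where "c = vnorm x"
  have c: "c > 0" using False vnorm_nonneg[of x] c_def by auto
  have "vnorm ((1/c) \<cdot>\<^sub>v x) = 1" unfolding vnorm_smult c_def[symmetric] using c by simp
  then have "vnorm (M *\<^sub>v ((1/c) \<cdot>\<^sub>v x)) \<le> norm2 M" using norm2_ge[OF M] x by simp
  then have "vnorm (M *\<^sub>v x) / c \<le> norm2 M" using mult_mat_vec[OF M x] c by (simp add: vnorm_smult)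
  then show ?thesis using c c_def by (simp add: divide_le_eq mult.commute)
qed

section \<open>Singular values and principal angles\<close>

lemma diag_mult_vec_index:
  assumes S: "(S::real mat) \<in> carrier_mat a b" and off: "\<forall>i<a. \<forall>j<b. i \<noteq> j \<longrightarrow> S $$ (i,j) = 0"
    and y: "y \<in> carrier_vec b" and l: "l < a"
  shows "(S *\<^sub>v y) $ l = (if l < b then S $$ (l,l) * y $ l else 0)"
proof -
  have "(S *\<^sub>v y) $ l = (\<Sum>t<b. S $$ (l,t) * y $ t)"
    using mult_mat_vec_index_sum[of l S y] S y l by auto
  also have "\<dots> = (\<Sum>t<b. if t = l then S $$ (l,l) * y $ t else 0)"
    using off l by (intro sum.cong) auto
  finally show ?thesis by simp
qed

text \<open>Replacing the last row by zero makes the square matrix singular; a kernel vector of it is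
  orthogonal to the remaining rows.\<close>

lemma exists_nonzero_vec_orth_rows:
  assumes B: "(B::real mat) \<in> carrier_mat a (Suc a)"
  shows "\<exists>v\<in>carrier_vec (Suc a). v \<noteq> 0\<^sub>v (Suc a) \<and> (\<forall>i<a. row B i \<bullet> v = 0)"
proof -
  define B' where "B' = mat\<^sub>r (Suc a) (Suc a) (\<lambda>i. if i = a then 0\<^sub>v (Suc a) else row B i)"
  have B'c: "B' \<in> carrier_mat (Suc a) (Suc a)" unfolding B'_def by auto
  have dc: "dim_col B = Suc a" using B by auto
  have rc: "(\<lambda>i. row B i) \<in> {0..<Suc a} \<rightarrow> carrier_vec (Suc a)"
    using row_carrier[of B] dc by (intro Pi_I) metis
  have "det B' = 0" unfolding B'_def
    using det_row_0[of a "Suc a" "\<lambda>i. row B i", OF _ rc] by simp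
  then obtain v where v: "v \<in> carrier_vec (Suc a)" "v \<noteq> 0\<^sub>v (Suc a)" "B' *\<^sub>v v = 0\<^sub>v (Suc a)"
    using det_0_iff_vec_prod_zero[OF B'c] by auto
  have "row B i \<bullet> v = 0" if i: "i < a" for i
  proof -
    have "row B' i = row B i" unfolding B'_def using i dc by (subst row_mat_of_row_fun) auto
    then show ?thesis using arg_cong[OF v(3), of "\<lambda>w. w $ i"] i B'c by simp
  qed
  then show ?thesis using v(1) v(2) by blast
qed

lemma exists_head_vec_mult_vec_tail_zero:
  fixes V :: "real mat"
  assumes V: "V \<in> carrier_mat k k" and ijk: "i + 1 + j = k"
  shows "\<exists>y\<in>carrier_vec k. y \<noteq> 0\<^sub>v k \<and> (\<forall>t. j < t \<and> t < k \<longrightarrow> y $ t = 0) \<and>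
           (\<forall>l. i < l \<and> l < k \<longrightarrow> (V *\<^sub>v y) $ l = 0)"
proof -
  define B where "B = mat j (Suc j) (\<lambda>(a,t). V $$ (i+1+a, t))"
  obtain y0 where y0: "y0 \<in> carrier_vec (Suc j)" "y0 \<noteq> 0\<^sub>v (Suc j)" "\<forall>a<j. row B a \<bullet> y0 = 0"
    using exists_nonzero_vec_orth_rows[of B j] unfolding B_def by auto
  define y where "y = vec k (\<lambda>t. if t \<le> j then y0 $ t else 0)"
  have yc: "y \<in> carrier_vec k" unfolding y_def by auto
  obtain t0 where t0: "t0 < Suc j" "y0 $ t0 \<noteq> 0"
    using y0(1,2) by (metis carrier_vecD eq_vecI index_zero_vec(1) index_zero_vec(2))
  then have "y $ t0 \<noteq> 0" and "t0 < k" using ijk unfolding y_def by auto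
  then have "y \<noteq> 0\<^sub>v k" by auto
  moreover have "(V *\<^sub>v y) $ l = 0" if l: "i < l" "l < k" for l
  proof -
    define a where "a = l - i - 1"
    have a: "a < j" "l = i + 1 + a" using l ijk a_def by auto
    have "(V *\<^sub>v y) $ l = (\<Sum>t<k. V $$ (l,t) * y $ t)"
      using mult_mat_vec_index_sum[of l V y] V yc l by auto
    also have "\<dots> = (\<Sum>t<Suc j. V $$ (l,t) * y $ t)"
      using ijk unfolding y_def by (intro sum.mono_neutral_right) auto
    also have "\<dots> = row B a \<bullet> y0"
      using ijk a y0(1) unfolding y_def B_def by (auto simp: scalar_prod_def lessThan_atLeast0 intro!: sum.cong)
    finally show ?thesis using y0(3) a by auto
  qed
  ultimately show ?thesis using yc unfolding y_def by auto
qed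

lemma diag_scalar_prod_mult_vec_ge:
  fixes S :: "real mat" and y :: "real vec"
  assumes S: "S \<in> carrier_mat m k" and km: "k \<le> m"
    and off: "\<forall>a<m. \<forall>c<k. a \<noteq> c \<longrightarrow> S $$ (a,c) = 0"
    and pos: "\<forall>a<k. S $$ (a,a) \<ge> 0"
    and dec: "\<forall>a c. a \<le> c \<longrightarrow> c < k \<longrightarrow> S $$ (c,c) \<le> S $$ (a,a)"
    and j: "j < k" and y: "y \<in> carrier_vec k" and sup: "\<forall>t. j < t \<and> t < k \<longrightarrow> y $ t = 0"
  shows "(S $$ (j,j))^2 * (y \<bullet> y) \<le> (S *\<^sub>v y) \<bullet> (S *\<^sub>v y)"
proof -
  have Sy: "S *\<^sub>v y \<in> carrier_vec m" using S y by auto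
  have "(S $$ (j,j))^2 * (y$l)^2 \<le> ((S *\<^sub>v y) $ l)^2" if l: "l < k" for l
  proof (cases "l \<le> j")
    case True
    have "(S $$ (j,j))^2 \<le> (S $$ (l,l))^2" using pos dec True j by (intro power_mono) auto
    then show ?thesis using diag_mult_vec_index[OF S off y, of l] l km
      by (simp add: power_mult_distrib mult_right_mono)
  qed (use l sup in simp)
  then have "(\<Sum>l<k. (S $$ (j,j))^2 * (y$l)^2) \<le> (\<Sum>l<k. ((S *\<^sub>v y) $ l)^2)"
    by (intro sum_mono) auto
  then have "(S $$ (j,j))^2 * (y \<bullet> y) \<le> (\<Sum>l<k. ((S *\<^sub>v y) $ l)^2)"
    using scalar_prod_self_eq_sum_squares[of y] y by (simp add: sum_distrib_left)
  also have "\<dots> \<le> (\<Sum>l<m. ((S *\<^sub>v y) $ l)^2)"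
    using km by (intro sum_mono2) auto
  also have "\<dots> = (S *\<^sub>v y) \<bullet> (S *\<^sub>v y)"
    using scalar_prod_self_eq_sum_squares[of "S *\<^sub>v y"] carrier_vecD[OF Sy] by metis
  finally show ?thesis .
qed

text \<open>One half of the Courant--Fischer min-max principle: a bound on \<open>M\<close> over the coordinate
  subspace of dimension \<open>i + 1\<close> bounds the \<open>i\<close>-th smallest singular value. The proof intersects that
  subspace with the span of the \<open>i + 1\<close> smallest right singular vectors.\<close>

lemma singular_value_le_of_head_bound:
  fixes M :: "real mat"
  assumes M: "M \<in> carrier_mat m k" and km: "k \<le> m" and sv: "singular_values_desc M s"
    and i: "i < k" and b: "b \<ge> 0"
    and H: "\<And>x. x \<in> carrier_vec k \<Longrightarrow> (\<forall>l. i < l \<and> l < k \<longrightarrow> x $ l = 0) \<Longrightarrow>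
             vnorm (M *\<^sub>v x) \<le> b * vnorm x"
  shows "s (k-1-i) \<le> b"
proof -
  obtain U' S' V' where svd: "is_svd M U' S' V'" and sS: "\<forall>i<min m k. s i = S' $$ (i,i)"
    using sv M unfolding singular_values_desc_def by auto
  have U': "U' \<in> carrier_mat m m" "orth_cols U'" and V': "V' \<in> carrier_mat k k" "orth_cols V'"
    and S': "S' \<in> carrier_mat m k"
    and off: "\<forall>a<m. \<forall>c<k. a \<noteq> c \<longrightarrow> S' $$ (a,c) = 0"
    and pos: "\<forall>a<k. S' $$ (a,a) \<ge> 0"
    and dec: "\<forall>a c. a \<le> c \<longrightarrow> c < k \<longrightarrow> S' $$ (c,c) \<le> S' $$ (a,a)"
    and Meq: "M = U' * S' * transpose_mat V'"
    using svd km M unfolding is_svd_def orthogonal_mat_def by (auto simp: min_def)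
  define j where "j = k - 1 - i"
  have jk: "j < k" "i + 1 + j = k" using i j_def by auto
  obtain y where y: "y \<in> carrier_vec k" "y \<noteq> 0\<^sub>v k" "\<forall>t. j < t \<and> t < k \<longrightarrow> y $ t = 0"
    and supp: "\<forall>l. i < l \<and> l < k \<longrightarrow> (V' *\<^sub>v y) $ l = 0"
    using exists_head_vec_mult_vec_tail_zero[OF V'(1) jk(2)] by blast
  have ypos: "y \<bullet> y > 0"
    using y(1,2) vnorm_eq_0_iff[of y] scalar_prod_self_nonneg[of y] unfolding vnorm_def by fastforce
  define x where "x = V' *\<^sub>v y"
  have xc: "x \<in> carrier_vec k" unfolding x_def using V' y by auto
  have "M *\<^sub>v x = (U' * S') *\<^sub>v (transpose_mat V' *\<^sub>v x)"
    unfolding Meq using U' S' V' xc by (intro assoc_mult_mat_vec) auto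
  then have Mx: "M *\<^sub>v x = U' *\<^sub>v (S' *\<^sub>v y)"
    unfolding x_def using U' S' V' y by (simp add: orth_cols_transpose_mult_mult_vec)
  have "(s j)^2 * (y \<bullet> y) \<le> (S' *\<^sub>v y) \<bullet> (S' *\<^sub>v y)"
    using diag_scalar_prod_mult_vec_ge[OF S' km off pos dec jk(1) y(1,3)] sS jk km by auto
  also have "\<dots> = (M *\<^sub>v x) \<bullet> (M *\<^sub>v x)"
    unfolding Mx using S' y by (intro orth_cols_scalar_prod_mult_vec[OF U', symmetric]) auto
  also have "\<dots> \<le> b^2 * (x \<bullet> x)"
  proof -
    have "(vnorm (M *\<^sub>v x))^2 \<le> (b * vnorm x)^2"
      using H[OF xc supp[folded x_def]] vnorm_nonneg by (intro power_mono) auto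
    then show ?thesis unfolding vnorm_def using scalar_prod_self_nonneg by (simp add: power_mult_distrib)
  qed
  also have "x \<bullet> x = y \<bullet> y" unfolding x_def by (rule orth_cols_scalar_prod_mult_vec[OF V' y(1)])
  finally have "(s j)^2 \<le> b^2" using ypos by simp
  then show ?thesis unfolding j_def using power2_le_imp_le[OF _ b] by blast
qed

lemma cols_first_mult_vec:
  assumes Y: "(Y::real mat) \<in> carrier_mat N N" and k: "k \<le> N" and x: "x \<in> carrier_vec k"
  shows "cols_first k Y *\<^sub>v x = Y *\<^sub>v vec N (\<lambda>l. if l < k then x $ l else 0)"
proof (rule eq_vecI)
  fix a assume "a < dim_vec (Y *\<^sub>v vec N (\<lambda>l. if l < k then x $ l else 0))"
  then have a: "a < N" using Y by simp
  have "(cols_first k Y *\<^sub>v x) $ a = (\<Sum>t<k. Y $$ (a,t) * x $ t)"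
    using mult_mat_vec_index_sum[of a "cols_first k Y" x] a x Y unfolding cols_first_def by auto
  also have "\<dots> = (\<Sum>t<N. Y $$ (a,t) * (vec N (\<lambda>l. if l < k then x $ l else 0)) $ t)"
    using k by (intro sum.mono_neutral_cong_left) auto
  finally show "(cols_first k Y *\<^sub>v x) $ a = (Y *\<^sub>v vec N (\<lambda>l. if l < k then x $ l else 0)) $ a"
    using mult_mat_vec_index_sum[of a Y] a Y by auto
qed (use Y in \<open>simp add: cols_first_def\<close>)

text \<open>Shrinking the witness \<open>r\<close> by \<open>c = 1 / (1 + \<tau>\<^sup>2)\<close> balances the error \<open>(1 - c) x\<close> on the head
  coordinates against the error \<open>c r\<close> on the tail: \<open>(1 - c)\<^sup>2 + c\<^sup>2 \<tau>\<^sup>2 = \<tau>\<^sup>2 / (1 + \<tau>\<^sup>2)\<close>.\<close>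

lemma shrunk_witness_dist_le:
  fixes x r :: "real vec" and \<tau> :: real
  assumes tau: "\<tau> \<ge> 0" and kN: "k \<le> N" and x: "x \<in> carrier_vec k" and r: "r \<in> carrier_vec N"
    and head: "\<forall>l<k. r $ l = x $ l" and tail: "(\<Sum>l\<in>{k..<N}. (r $ l)^2) \<le> \<tau>^2 * (x \<bullet> x)"
  shows "vnorm (vec N (\<lambda>l. if l < k then x $ l else 0) - (1 / (1 + \<tau>^2)) \<cdot>\<^sub>v r)
           \<le> \<tau> / sqrt (1 + \<tau>^2) * vnorm x"
proof -
  define c where "c = 1 / (1 + \<tau>^2)"
  define z where "z = vec N (\<lambda>l. if l < k then x $ l else 0) - c \<cdot>\<^sub>v r"
  have zc: "z \<in> carrier_vec N" unfolding z_def using r by simp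
  have head_z: "z $ l = (1 - c) * x $ l" if "l < k" for l
    using that kN head r unfolding z_def by (simp add: algebra_simps)
  have tail_z: "z $ l = - c * r $ l" if "k \<le> l" "l < N" for l
    using that r unfolding z_def by simp
  have "z \<bullet> z = (\<Sum>l\<in>{0..<k}. (z$l)^2) + (\<Sum>l\<in>{k..<N}. (z$l)^2)"
    using scalar_prod_self_eq_sum_squares[of z] zc kN
    by (simp add: lessThan_atLeast0 sum.atLeastLessThan_concat)
  also have "(\<Sum>l\<in>{0..<k}. (z$l)^2) = (1-c)^2 * (x \<bullet> x)"
    using head_z scalar_prod_self_eq_sum_squares[of x] x
    by (simp add: sum_distrib_left lessThan_atLeast0 power_mult_distrib)
  also have "(\<Sum>l\<in>{k..<N}. (z$l)^2) = c^2 * (\<Sum>l\<in>{k..<N}. (r$l)^2)"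
    using tail_z by (simp add: sum_distrib_left power_mult_distrib)
  also have "c^2 * (\<Sum>l\<in>{k..<N}. (r$l)^2) \<le> c^2 * (\<tau>^2 * (x \<bullet> x))"
    using tail by (intro mult_left_mono) auto
  finally have "z \<bullet> z \<le> ((1-c)^2 + c^2 * \<tau>^2) * (x \<bullet> x)" by (simp add: algebra_simps)
  also have "(1-c)^2 + c^2 * \<tau>^2 = \<tau>^2 / (1 + \<tau>^2)"
  proof -
    have p: "1 + \<tau>^2 > 0" by (simp add: add_pos_nonneg)
    then have e: "1 - c = \<tau>^2 * c" unfolding c_def by (simp add: field_simps)
    have "(1-c)^2 + c^2 * \<tau>^2 = \<tau>^2 * c * (c * (1 + \<tau>^2))"
      unfolding e by (simp add: power2_eq_square algebra_simps)
    also have "c * (1 + \<tau>^2) = 1" unfolding c_def using p by simp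
    finally show ?thesis unfolding c_def by simp
  qed
  finally have "sqrt (z \<bullet> z) \<le> sqrt (\<tau>^2 / (1 + \<tau>^2) * (x \<bullet> x))" by (rule real_sqrt_le_mono)
  also have "\<dots> = \<tau> / sqrt (1 + \<tau>^2) * sqrt (x \<bullet> x)"
    using tau by (simp add: real_sqrt_mult real_sqrt_divide)
  finally show ?thesis unfolding vnorm_def z_def c_def .
qed

lemma principal_angle_sine_le:
  fixes X Y :: "real mat"
  assumes X: "X \<in> carrier_mat N dX" and Xo: "orth_cols X"
    and Y: "Y \<in> carrier_mat N N" and Yo: "orth_cols Y"
    and kN: "k \<le> N" and i: "i < k" and tau: "\<tau> \<ge> 0"
    and H: "\<And>x. x \<in> carrier_vec k \<Longrightarrow> (\<forall>l. i < l \<and> l < k \<longrightarrow> x $ l = 0) \<Longrightarrow>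
       \<exists>r\<in>carrier_vec N. Y *\<^sub>v r \<in> range_mat X \<and> (\<forall>l<k. r $ l = x $ l) \<and>
          (\<Sum>l\<in>{k..<N}. (r $ l)^2) \<le> \<tau>^2 * (x \<bullet> x)"
    and pa: "principal_angle_sines X (cols_first k Y) t"
  shows "t i \<le> \<tau> / sqrt (1 + \<tau>^2)"
proof -
  define Yk where "Yk = cols_first k Y"
  have Ykc: "Yk \<in> carrier_mat N k" unfolding Yk_def cols_first_def using Y by auto
  define M where "M = (1\<^sub>m N - X * transpose_mat X) * Yk"
  have Mc: "M \<in> carrier_mat N k" unfolding M_def using X Ykc by auto
  obtain s where sv: "singular_values_desc M s" and ts: "\<forall>l<k. t l = s (k - 1 - l)"
    using pa X Ykc unfolding principal_angle_sines_def M_def Yk_def by auto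
  have "s (k-1-i) \<le> \<tau> / sqrt (1 + \<tau>^2)"
  proof (rule singular_value_le_of_head_bound[OF Mc kN sv i])
    fix x :: "real vec" assume x: "x \<in> carrier_vec k" and sup: "\<forall>l. i < l \<and> l < k \<longrightarrow> x $ l = 0"
    obtain r :: "real vec" where r: "r \<in> carrier_vec N" "Y *\<^sub>v r \<in> range_mat X" "\<forall>l<k. r $ l = x $ l"
      "(\<Sum>l\<in>{k..<N}. (r $ l)^2) \<le> \<tau>^2 * (x \<bullet> x)" using H[OF x sup] by auto
    define xt where "xt = vec N (\<lambda>l. if l < k then x $ l else 0)"
    define c where "c = 1 / (1 + \<tau>^2)"
    have xtc: "xt \<in> carrier_vec N" unfolding xt_def by simp
    have "c \<cdot>\<^sub>v (Y *\<^sub>v r) \<in> range_mat X" by (rule smult_mem_range_mat[OF X r(2)])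
    moreover have "M *\<^sub>v x = (1\<^sub>m N - X * transpose_mat X) *\<^sub>v (Y *\<^sub>v xt)"
      unfolding M_def xt_def cols_first_mult_vec[OF Y kN x, symmetric] Yk_def[symmetric]
      using X Ykc x by (intro assoc_mult_mat_vec) auto
    ultimately have "vnorm (M *\<^sub>v x) \<le> vnorm (Y *\<^sub>v xt - c \<cdot>\<^sub>v (Y *\<^sub>v r))"
      using orth_proj_residual_le[OF X Xo] Y xtc by simp
    also have "Y *\<^sub>v xt - c \<cdot>\<^sub>v (Y *\<^sub>v r) = Y *\<^sub>v (xt - c \<cdot>\<^sub>v r)"
      using Y xtc r(1) by (simp add: mult_minus_distrib_mat_vec mult_mat_vec)
    also have "vnorm \<dots> = vnorm (xt - c \<cdot>\<^sub>v r)"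
      unfolding vnorm_def using orth_cols_scalar_prod_mult_vec[OF Y Yo, of "xt - c \<cdot>\<^sub>v r"] xtc r(1) by simp
    also have "\<dots> \<le> \<tau> / sqrt (1 + \<tau>^2) * vnorm x"
      unfolding xt_def c_def by (rule shrunk_witness_dist_le[OF tau kN x r(1) r(3) r(4)])
    finally show "vnorm (M *\<^sub>v x) \<le> \<tau> / sqrt (1 + \<tau>^2) * vnorm x" .
  qed (use tau in simp)
  then show ?thesis using ts i by simp
qed

section \<open>Pseudo-inverse of a matrix of full row rank\<close>

lemma mult_selection_mat_exists:
  fixes F G :: "'a :: comm_ring_1 mat"
  assumes F: "F \<in> carrier_mat n d" and G: "G \<in> carrier_mat n c"
    and sel: "\<forall>j<c. \<exists>l<d. col G j = col F l"
  shows "\<exists>E\<in>carrier_mat d c. F * E = G"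
proof -
  define \<sigma> where "\<sigma> = (\<lambda>j. SOME l. l < d \<and> col G j = col F l)"
  have sig: "\<sigma> j < d \<and> col G j = col F (\<sigma> j)" if "j < c" for j
    using someI_ex[OF sel[rule_format, OF that]] unfolding \<sigma>_def by blast
  define E :: "'a mat" where "E = mat d c (\<lambda>(r,j). if r = \<sigma> j then 1 else 0)"
  have "F * E = G"
  proof (rule eq_matI)
    fix i j assume "i < dim_row G" "j < dim_col G"
    then have i: "i < n" and j: "j < c" using G by auto
    have "(F * E) $$ (i,j) = (\<Sum>r\<in>{0..<d}. F $$ (i,r) * (if r = \<sigma> j then 1 else 0))"
      using F i j sig[OF j] unfolding E_def by (simp add: scalar_prod_def)
    also have "\<dots> = (\<Sum>r\<in>{0..<d}. if r = \<sigma> j then F $$ (i,r) else 0)"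
      by (intro sum.cong) auto
    also have "\<dots> = col F (\<sigma> j) $ i" using sig[OF j] F i by simp
    finally show "(F * E) $$ (i,j) = G $$ (i,j)" using sig[OF j] G i j by (metis carrier_matD col_def index_vec)
  qed (use F G E_def in auto)
  then show ?thesis unfolding E_def by auto
qed

text \<open>A maximal independent set of columns of \<open>F\<close> forms an invertible \<open>n \<times> n\<close> matrix \<open>G\<close>, and
  \<open>G = F E\<close> for a column-selection matrix \<open>E\<close>, so \<open>E G\<^sup>-\<^sup>1\<close> is a right inverse.\<close>

lemma (in vec_space) full_row_rank_right_inverse:
  assumes F: "F \<in> carrier_mat n d" and r: "rank F = n"
  shows "\<exists>R. R \<in> carrier_mat d n \<and> F * R = 1\<^sub>m n"
proof -
  obtain S where max: "maximal S (\<lambda>T. T \<subseteq> set (cols F) \<and> lin_indpt T)"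
    using maximal_exists[of "(\<lambda>T. T \<subseteq> set (cols F) \<and> lin_indpt T)" "card (set (cols F))" "{}"]
    by (meson List.finite_set card_mono empty_iff empty_subsetI finite_lin_indpt2 rev_finite_subset)
  have SF: "S \<subseteq> set (cols F)" and li: "lin_indpt S" using max unfolding maximal_def by auto
  have cS: "card S = n" using rank_card_indpt[OF F max] r by simp
  have "finite S" using SF finite_subset by blast
  then obtain L where L: "set L = S" "distinct L" using finite_distinct_list by blast
  have lenL: "length L = n" using L cS distinct_card by fastforce
  have Lc: "set L \<subseteq> carrier_vec n" using L SF cols_dim F by fastforce
  define G where "G = mat_of_cols n L"
  have Gc: "G \<in> carrier_mat n n" unfolding G_def using lenL mat_of_cols_carrier(1)[of n L] by simp
  have cG: "cols G = L" unfolding G_def using Lc by simp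
  have "rank G = n" using lin_indpt_full_rank[OF Gc] cG L li by simp
  then obtain Gi where Gi: "Gi \<in> carrier_mat n n" "G * Gi = 1\<^sub>m n"
    using det_rank_iff[OF Gc] det_non_zero_imp_unit[OF Gc, of undefined]
    unfolding Units_def ring_mat_def by auto
  have "\<forall>j<n. \<exists>l<d. col G j = col F l"
  proof (intro allI impI)
    fix j assume j: "j < n"
    then have "col G j = L ! j" using cG Gc by (metis carrier_matD(2) cols_nth)
    also have "L ! j \<in> set (cols F)" using L SF lenL j by auto
    finally obtain l where "l < length (cols F)" "col G j = cols F ! l" by (auto simp: in_set_conv_nth)
    then show "\<exists>l<d. col G j = col F l" using F by auto
  qed
  then obtain E where E: "E \<in> carrier_mat d n" "F * E = G"
    using mult_selection_mat_exists[OF F Gc] by blast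
  have "F * (E * Gi) = 1\<^sub>m n" using E Gi F by (metis assoc_mult_mat)
  then show ?thesis using E Gi by (intro exI[of _ "E * Gi"]) auto
qed

lemma is_pinv_mult_eq_one:
  assumes F: "F \<in> carrier_mat k d" and R: "R \<in> carrier_mat d k" "F * R = 1\<^sub>m k"
    and X: "is_pinv F X"
  shows "F * X = 1\<^sub>m k"
proof -
  have Xc: "X \<in> carrier_mat d k" and FXF: "F * X * F = F" using X F unfolding is_pinv_def by auto
  have FXc: "F * X \<in> carrier_mat k k" using F Xc by simp
  have "F * X = F * X * (F * R)" unfolding R(2) using right_mult_one_mat[OF FXc] by simp
  also have "\<dots> = F * X * F * R" using assoc_mult_mat[OF FXc F R(1), symmetric] .
  finally show ?thesis using FXF R by simp
qed

lemma is_pinv_unique_of_right_inverse: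
  assumes F: "F \<in> carrier_mat k d" and R: "R \<in> carrier_mat d k" "F * R = 1\<^sub>m k"
    and X: "is_pinv F X" and Y: "is_pinv F Y"
  shows "X = Y"
proof -
  have Xc: "X \<in> carrier_mat d k" and Yc: "Y \<in> carrier_mat d k"
    and sX: "transpose_mat (X * F) = X * F" and sY: "transpose_mat (Y * F) = Y * F"
    using X Y F unfolding is_pinv_def by auto
  have FX: "F * X = 1\<^sub>m k" and FY: "F * Y = 1\<^sub>m k" using is_pinv_mult_eq_one[OF F R] X Y by auto
  have XFc: "X * F \<in> carrier_mat d d" and YFc: "Y * F \<in> carrier_mat d d" using Xc Yc F by auto
  have "X * F = X * (F * Y) * F" unfolding FY using Xc by simp
  also have "\<dots> = (X * F) * (Y * F)"
    using assoc_mult_mat[OF Xc F Yc] assoc_mult_mat[OF XFc Yc F] by simp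
  also have "\<dots> = transpose_mat ((Y * F) * (X * F))"
    using sX sY transpose_mult[OF YFc XFc] by simp
  also have "(Y * F) * (X * F) = Y * (F * X) * F"
    using assoc_mult_mat[OF Yc F Xc] assoc_mult_mat[OF YFc Xc F] by simp
  finally have XF_YF: "X * F = Y * F" using sY FX Yc by simp
  have "X = (X * F) * Y" using FY Xc assoc_mult_mat[OF Xc F Yc] by simp
  also have "\<dots> = Y" unfolding XF_YF using FY Yc assoc_mult_mat[OF Yc F Yc] by simp
  finally show ?thesis .
qed

lemma det_gram_nonzero_of_right_inverse:
  fixes F :: "real mat"
  assumes F: "F \<in> carrier_mat k d" and R: "R \<in> carrier_mat d k" "F * R = 1\<^sub>m k"
  shows "det (F * transpose_mat F) \<noteq> 0"
proof
  have Ft: "transpose_mat F \<in> carrier_mat d k" using F by simp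
  assume "det (F * transpose_mat F) = 0"
  then obtain v where v: "v \<in> carrier_vec k" "v \<noteq> 0\<^sub>v k" "(F * transpose_mat F) *\<^sub>v v = 0\<^sub>v k"
    using det_0_iff_vec_prod_zero[of "F * transpose_mat F" k] F by auto
  define w where "w = transpose_mat F *\<^sub>v v"
  have wc: "w \<in> carrier_vec d" unfolding w_def using Ft v by auto
  have "F *\<^sub>v w = 0\<^sub>v k" unfolding w_def using v(3) F Ft v(1) by simp
  then have "w \<bullet> w = 0"
    using transpose_vec_mult_scalar[OF F wc v(1)] scalar_prod_right_zero[OF v(1)]
    unfolding w_def[symmetric] by simp
  then have "w = 0\<^sub>v d" using vnorm_eq_0_iff[of w] wc unfolding vnorm_def by auto
  moreover have "transpose_mat R *\<^sub>v w = v"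
  proof -
    have "transpose_mat R *\<^sub>v w = (transpose_mat R * transpose_mat F) *\<^sub>v v"
      unfolding w_def using R Ft v by simp
    also have "transpose_mat R * transpose_mat F = 1\<^sub>m k"
      using transpose_mult[OF F R(1)] R by simp
    finally show ?thesis using v by simp
  qed
  ultimately show False using v(2) R by auto
qed

text \<open>For \<open>F\<close> of full row rank, \<open>F\<^sup>T (F F\<^sup>T)\<^sup>-\<^sup>1\<close> satisfies the four Penrose conditions.\<close>

lemma is_pinv_exists_of_right_inverse:
  fixes F :: "real mat"
  assumes F: "F \<in> carrier_mat k d" and R: "R \<in> carrier_mat d k" "F * R = 1\<^sub>m k"
  shows "\<exists>X. is_pinv F X \<and> F * X = 1\<^sub>m k"
proof -
  have Ft: "transpose_mat F \<in> carrier_mat d k" using F by simp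
  define G where "G = F * transpose_mat F"
  have Gc: "G \<in> carrier_mat k k" unfolding G_def using F by simp
  have Gt: "transpose_mat G = G" unfolding G_def using transpose_mult[OF F Ft] by simp
  obtain K where K: "K \<in> carrier_mat k k" "G * K = 1\<^sub>m k" "K * G = 1\<^sub>m k"
    using det_gram_nonzero_of_right_inverse[OF F R, folded G_def] det_non_zero_imp_unit[OF Gc, of undefined]
    unfolding Units_def ring_mat_def by auto
  have Kt: "transpose_mat K = K"
  proof -
    have KtG: "transpose_mat K * G = 1\<^sub>m k"
      using transpose_mult[OF Gc K(1)] K Gt by (metis transpose_one)
    have "transpose_mat K = (transpose_mat K * G) * K"
      using K Gc assoc_mult_mat[of "transpose_mat K" k k G k K k] by simp
    then show ?thesis using KtG K by simp
  qed
  define X where "X = transpose_mat F * K"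
  have Xc: "X \<in> carrier_mat d k" unfolding X_def using Ft K by simp
  have FX: "F * X = 1\<^sub>m k" unfolding X_def
    using assoc_mult_mat[OF F Ft K(1), symmetric] K(2) unfolding G_def by simp
  have "transpose_mat (X * F) = transpose_mat F * (K * F)"
    using transpose_mult[OF Xc F] transpose_mult[OF Ft K(1)] Kt unfolding X_def by simp
  also have "\<dots> = X * F" unfolding X_def using assoc_mult_mat[OF Ft K(1) F] by simp
  finally have "is_pinv F X" unfolding is_pinv_def using Xc FX F by auto
  then show ?thesis using FX by blast
qed

lemma pinv_full_row_rank:
  fixes F :: "real mat"
  assumes F: "F \<in> carrier_mat k d" and r: "vec_space.rank k F = k"
  shows "pinv F \<in> carrier_mat d k" and "F * pinv F = 1\<^sub>m k"
proof -
  obtain R where R: "R \<in> carrier_mat d k" "F * R = 1\<^sub>m k"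
    using vec_space.full_row_rank_right_inverse[OF F r] by blast
  obtain X where X: "is_pinv F X" "F * X = 1\<^sub>m k"
    using is_pinv_exists_of_right_inverse[OF F R] by blast
  have "pinv F = X" unfolding pinv_def using X(1) is_pinv_unique_of_right_inverse[OF F R] by blast
  then show "pinv F \<in> carrier_mat d k" "F * pinv F = 1\<^sub>m k" using X F unfolding is_pinv_def by auto
qed

section \<open>Action of \<open>A\<close> and its sketch in singular coordinates\<close>

lemma transpose_cols_first_mult_vec_index:
  assumes U: "U \<in> carrier_mat m m" and v: "v \<in> carrier_vec m" and j: "j < k" and km: "k \<le> m"
  shows "(transpose_mat (cols_first k U) *\<^sub>v v) $ j = (transpose_mat U *\<^sub>v v) $ j"
  using U v j km unfolding cols_first_def by (simp add: scalar_prod_def)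

lemma sum_sq_transpose_mult_vec_tail:
  assumes U: "U \<in> carrier_mat m m" and v: "v \<in> carrier_vec m" and km: "k \<le> m"
  shows "(\<Sum>l\<in>{k..<m}. ((transpose_mat U *\<^sub>v v) $ l)^2)
           = (transpose_mat (cols_rest k U) *\<^sub>v v) \<bullet> (transpose_mat (cols_rest k U) *\<^sub>v v)"
proof -
  have "(transpose_mat (cols_rest k U) *\<^sub>v v) $ j = (transpose_mat U *\<^sub>v v) $ (j + k)" if "j < m - k" for j
    using U v that unfolding cols_rest_def by (simp add: scalar_prod_def)
  then have "(transpose_mat (cols_rest k U) *\<^sub>v v) \<bullet> (transpose_mat (cols_rest k U) *\<^sub>v v)
      = (\<Sum>j\<in>{0..<m-k}. ((transpose_mat U *\<^sub>v v) $ (j + k))^2)"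
    unfolding scalar_prod_self_eq_sum_squares using U by (simp add: cols_rest_def lessThan_atLeast0)
  also have "\<dots> = (\<Sum>l\<in>{k..<m}. ((transpose_mat U *\<^sub>v v) $ l)^2)"
    using sum.shift_bounds_nat_ivl[of "\<lambda>l. ((transpose_mat U *\<^sub>v v) $ l)^2" 0 k "m-k"] km by simp
  finally show ?thesis ..
qed

locale svd_of =
  fixes A U S V :: "real mat" and m n :: nat
  assumes A_carrier: "A \<in> carrier_mat m n" and tall: "n \<le> m" and svd: "is_svd A U S V"
begin

lemma U_carrier: "U \<in> carrier_mat m m" and U_orth: "orth_cols U"
  and V_carrier: "V \<in> carrier_mat n n" and V_orth: "orth_cols V"
  and S_carrier: "S \<in> carrier_mat m n"
  and S_diag: "\<forall>i<m. \<forall>j<n. i \<noteq> j \<longrightarrow> S $$ (i,j) = 0"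
  and A_eq: "A = U * S * transpose_mat V"
  using svd carrier_matD[OF A_carrier] unfolding is_svd_def orthogonal_mat_def by auto

lemma sv_nonneg: "a < n \<Longrightarrow> 0 \<le> S $$ (a,a)"
  and sv_antimono: "a \<le> c \<Longrightarrow> c < n \<Longrightarrow> S $$ (c,c) \<le> S $$ (a,a)"
  using svd carrier_matD[OF A_carrier] tall unfolding is_svd_def by (auto simp: min_def)

lemma transpose_S_mult_vec_index:
  assumes u: "u \<in> carrier_vec m" and l: "l < n"
  shows "(transpose_mat S *\<^sub>v u) $ l = S $$ (l,l) * u $ l"
proof -
  have "\<forall>i<n. \<forall>j<m. i \<noteq> j \<longrightarrow> transpose_mat S $$ (i,j) = 0" using S_diag S_carrier by auto
  then show ?thesis
    using diag_mult_vec_index[of "transpose_mat S" n m u l] S_carrier u l tall by simp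
qed

lemma A_mult_V_mult_vec:
  assumes y: "y \<in> carrier_vec n"
  shows "A *\<^sub>v (V *\<^sub>v y) = U *\<^sub>v (S *\<^sub>v y)"
proof -
  have "A *\<^sub>v (V *\<^sub>v y) = (U * S) *\<^sub>v (transpose_mat V *\<^sub>v (V *\<^sub>v y))"
    unfolding A_eq using U_carrier S_carrier V_carrier y by (intro assoc_mult_mat_vec) auto
  then show ?thesis
    using U_carrier S_carrier y orth_cols_transpose_mult_mult_vec[OF V_carrier V_orth y] by simp
qed

lemma transpose_A_mult_U_mult_vec:
  "u \<in> carrier_vec m \<Longrightarrow> transpose_mat A *\<^sub>v (U *\<^sub>v u) = V *\<^sub>v (transpose_mat S *\<^sub>v u)"
proof -
  assume u: "u \<in> carrier_vec m"
  have "transpose_mat A = V * transpose_mat (U * S)"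
    unfolding A_eq using transpose_mult[of "U * S" m n "transpose_mat V" n] U_carrier S_carrier V_carrier
    by simp
  also have "\<dots> = V * transpose_mat S * transpose_mat U"
    using transpose_mult[OF U_carrier S_carrier] U_carrier S_carrier V_carrier
    by (simp add: assoc_mult_mat[of V n n _ n _ m])
  finally have At: "transpose_mat A = V * transpose_mat S * transpose_mat U" .
  have "transpose_mat A *\<^sub>v (U *\<^sub>v u) = (V * transpose_mat S) *\<^sub>v (transpose_mat U *\<^sub>v (U *\<^sub>v u))"
    unfolding At using U_carrier S_carrier V_carrier u by (intro assoc_mult_mat_vec) auto
  then show ?thesis
    using orth_cols_transpose_mult_mult_vec[OF U_carrier U_orth u] V_carrier S_carrier u by simp
qed

definition sv_scale :: "nat \<Rightarrow> real vec \<Rightarrow> real vec" where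
  "sv_scale e y = vec n (\<lambda>l. S $$ (l,l) ^ e * y $ l)"

lemma sv_scale_carrier: "sv_scale e y \<in> carrier_vec n"
  unfolding sv_scale_def by simp

lemma sv_scale_sv_scale: "sv_scale a (sv_scale b y) = sv_scale (a + b) y"
  unfolding sv_scale_def by (intro eq_vecI) (auto simp: power_add)

lemma gram_mult_V_mult_vec:
  assumes y: "y \<in> carrier_vec n"
  shows "(transpose_mat A * A) *\<^sub>v (V *\<^sub>v y) = V *\<^sub>v sv_scale 2 y"
proof -
  have Sy: "S *\<^sub>v y \<in> carrier_vec m" using S_carrier y by auto
  have "transpose_mat S *\<^sub>v (S *\<^sub>v y) = sv_scale 2 y"
    using transpose_S_mult_vec_index[OF Sy] diag_mult_vec_index[OF S_carrier S_diag y] tall S_carrier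
    by (intro eq_vecI) (auto simp: sv_scale_def power2_eq_square)
  moreover have "(transpose_mat A * A) *\<^sub>v (V *\<^sub>v y) = transpose_mat A *\<^sub>v (A *\<^sub>v (V *\<^sub>v y))"
    using A_carrier V_carrier y by (intro assoc_mult_mat_vec) auto
  ultimately show ?thesis
    unfolding A_mult_V_mult_vec[OF y] transpose_A_mult_U_mult_vec[OF Sy] by simp
qed

lemma gram_power_mult_V_mult_vec:
  "y \<in> carrier_vec n \<Longrightarrow> ((transpose_mat A * A) ^\<^sub>m q) *\<^sub>v (V *\<^sub>v y) = V *\<^sub>v sv_scale (2*q) y"
proof (induction q arbitrary: y)
  case 0
  have "sv_scale 0 y = y" unfolding sv_scale_def using 0 by (intro eq_vecI) auto
  then show ?case using 0 V_carrier A_carrier by simp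
next
  case (Suc q)
  have AA: "transpose_mat A * A \<in> carrier_mat n n" using A_carrier by simp
  have "((transpose_mat A * A) ^\<^sub>m Suc q) *\<^sub>v (V *\<^sub>v y)
      = ((transpose_mat A * A) ^\<^sub>m q) *\<^sub>v (V *\<^sub>v sv_scale 2 y)"
    using AA V_carrier Suc.prems
    by (simp add: assoc_mult_mat_vec[of _ n n _ n] gram_mult_V_mult_vec)
  then show ?case using Suc.IH[OF sv_scale_carrier] by (simp add: sv_scale_sv_scale)
qed

lemma sketch_mult_vec:
  assumes Phi: "Phi \<in> carrier_mat m d" and z: "z \<in> carrier_vec d"
  shows "((transpose_mat A * A) ^\<^sub>m q * transpose_mat A * Phi) *\<^sub>v z
     = V *\<^sub>v sv_scale (2*q+1) (transpose_mat U *\<^sub>v (Phi *\<^sub>v z))"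
proof -
  define c where "c = transpose_mat U *\<^sub>v (Phi *\<^sub>v z)"
  have c: "c \<in> carrier_vec m" unfolding c_def using U_carrier Phi z by auto
  have AA: "(transpose_mat A * A) ^\<^sub>m q \<in> carrier_mat n n" using A_carrier by simp
  have "((transpose_mat A * A) ^\<^sub>m q * transpose_mat A * Phi) *\<^sub>v z
      = ((transpose_mat A * A) ^\<^sub>m q * transpose_mat A) *\<^sub>v (Phi *\<^sub>v z)"
    using AA A_carrier Phi z by (intro assoc_mult_mat_vec) auto
  also have "\<dots> = (transpose_mat A * A) ^\<^sub>m q *\<^sub>v (transpose_mat A *\<^sub>v (Phi *\<^sub>v z))"
    using AA A_carrier Phi z by (intro assoc_mult_mat_vec) auto
  also have "Phi *\<^sub>v z = U *\<^sub>v c"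
    unfolding c_def using orthogonal_mult_transpose_mult_vec[OF U_carrier U_orth] Phi z by simp
  also have "transpose_mat A *\<^sub>v (U *\<^sub>v c) = V *\<^sub>v sv_scale 1 c"
    unfolding transpose_A_mult_U_mult_vec[OF c] sv_scale_def
    using transpose_S_mult_vec_index[OF c] S_carrier by (intro arg_cong[where f = "(*\<^sub>v) V"] eq_vecI) auto
  finally show ?thesis
    unfolding c_def using gram_power_mult_V_mult_vec[OF sv_scale_carrier] by (simp add: sv_scale_sv_scale)
qed

lemma tail_sum_sq_sv_scale_le:
  fixes c :: "real vec"
  assumes k: "k < n"
  shows "(\<Sum>l\<in>{k..<n}. (S $$ (l,l) ^ e * c $ l)^2) \<le> (S $$ (k,k) ^ e)^2 * (\<Sum>l\<in>{k..<m}. (c $ l)^2)"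
proof -
  have "(\<Sum>l\<in>{k..<n}. (S $$ (l,l) ^ e * c $ l)^2) \<le> (\<Sum>l\<in>{k..<n}. (S $$ (k,k) ^ e)^2 * (c $ l)^2)"
  proof (intro sum_mono)
    fix l assume l: "l \<in> {k..<n}"
    have "(S $$ (l,l) ^ e)^2 \<le> (S $$ (k,k) ^ e)^2"
      using sv_nonneg sv_antimono l by (intro power_mono zero_le_power) auto
    then show "(S $$ (l,l) ^ e * c $ l)^2 \<le> (S $$ (k,k) ^ e)^2 * (c $ l)^2"
      by (simp add: power_mult_distrib mult_right_mono)
  qed
  also have "\<dots> \<le> (S $$ (k,k) ^ e)^2 * (\<Sum>l\<in>{k..<m}. (c $ l)^2)"
    using tall by (auto simp: sum_distrib_left intro!: sum_mono2)
  finally show ?thesis .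
qed

lemma head_sum_sq_div_sv_pow_le:
  fixes x :: "real vec"
  assumes i: "i < k" and k: "k \<le> n" and si: "S $$ (i,i) > 0"
    and x: "x \<in> carrier_vec k" and sup: "\<forall>l. i < l \<and> l < k \<longrightarrow> x $ l = 0"
  shows "(\<Sum>l<k. (x $ l / S $$ (l,l) ^ e)^2) \<le> (x \<bullet> x) / (S $$ (i,i) ^ e)^2"
proof -
  have "(x $ l / S $$ (l,l) ^ e)^2 \<le> (x $ l)^2 / (S $$ (i,i) ^ e)^2" if l: "l < k" for l
  proof (cases "l \<le> i")
    case True
    have "S $$ (i,i) \<le> S $$ (l,l)" using sv_antimono[of l i] True i k by simp
    then have "S $$ (i,i) ^ e \<le> S $$ (l,l) ^ e" using si by (intro power_mono) auto
    then have le: "(S $$ (i,i) ^ e)^2 \<le> (S $$ (l,l) ^ e)^2" using si by (intro power_mono[of _ _ 2]) auto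
    have pi: "0 < (S $$ (i,i) ^ e)^2" using si by simp
    then have pl: "0 < (S $$ (l,l) ^ e)^2" using le by linarith
    have "(x $ l)^2 / (S $$ (l,l) ^ e)^2 \<le> (x $ l)^2 / (S $$ (i,i) ^ e)^2"
      using divide_left_mono[OF le _ mult_pos_pos[OF pl pi]] by simp
    then show ?thesis by (simp add: power_divide)
  qed (use sup l in simp)
  then have "(\<Sum>l<k. (x $ l / S $$ (l,l) ^ e)^2) \<le> (\<Sum>l<k. (x $ l)^2 / (S $$ (i,i) ^ e)^2)"
    by (intro sum_mono) auto
  also have "\<dots> = (x \<bullet> x) / (S $$ (i,i) ^ e)^2"
    using scalar_prod_self_eq_sum_squares[of x] x by (simp add: sum_divide_distrib)
  finally show ?thesis .
qed

end

section \<open>Randomized unpivoted QLP\<close>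

locale ru_qlp = svd_of +
  fixes k q d :: nat and Phi Pbar Q R Ptil :: "real mat"
  assumes k_less_n: "k < n" and sv_k_pos: "S $$ (k-1,k-1) > 0"
    and Phi_carrier: "Phi \<in> carrier_mat m d"
    and Pbar_carrier: "Pbar \<in> carrier_mat n d" and Pbar_orth: "orth_cols Pbar"
    and Pbar_range: "range_mat Pbar = range_mat ((transpose_mat A * A) ^\<^sub>m q * transpose_mat A * Phi)"
    and Q_carrier: "Q \<in> carrier_mat m d" and Q_orth: "orth_cols Q"
    and R_carrier: "R \<in> carrier_mat d d" and A_Pbar_eq: "A * Pbar = Q * R"
    and Ptil_carrier: "Ptil \<in> carrier_mat d d" and Ptil_orth: "orth_cols Ptil"
    and Phi1_rank: "vec_space.rank k (transpose_mat (cols_first k U) * Phi) = k"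
begin

abbreviation "Phi1 \<equiv> transpose_mat (cols_first k U) * Phi"
abbreviation "Phi2 \<equiv> transpose_mat (cols_rest k U) * Phi"
abbreviation "g \<equiv> norm2 (Phi2 * pinv Phi1)"
abbreviation \<delta> :: "nat \<Rightarrow> real" where "\<delta> i \<equiv> S $$ (k,k) / S $$ (i,i)"

abbreviation "Phi_coords z \<equiv> transpose_mat U *\<^sub>v (Phi *\<^sub>v z)"

lemma sv_pos: "l < k \<Longrightarrow> S $$ (l,l) > 0"
  using sv_antimono[of l "k-1"] sv_k_pos k_less_n by fastforce

lemma Phi1_carrier: "Phi1 \<in> carrier_mat k d" and Phi2_carrier: "Phi2 \<in> carrier_mat (m-k) d"
  using U_carrier Phi_carrier unfolding cols_first_def cols_rest_def by auto

lemma pinv_Phi1_carrier: "pinv Phi1 \<in> carrier_mat d k"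
  and Phi1_mult_pinv: "Phi1 * pinv Phi1 = 1\<^sub>m k"
  using pinv_full_row_rank[OF Phi1_carrier Phi1_rank] by auto

lemma g_nonneg: "g \<ge> 0"
  using Phi2_carrier pinv_Phi1_carrier by (intro norm2_nonneg) auto

lemma Phi_coords_pinv_head:
  assumes xs: "xs \<in> carrier_vec k" and l: "l < k"
  shows "Phi_coords (pinv Phi1 *\<^sub>v xs) $ l = xs $ l"
proof -
  define z where "z = pinv Phi1 *\<^sub>v xs"
  have z: "z \<in> carrier_vec d" unfolding z_def using pinv_Phi1_carrier xs by simp
  have "Phi1 *\<^sub>v z = xs"
    unfolding z_def using pinv_Phi1_carrier Phi1_mult_pinv xs Phi1_carrier by (simp flip: assoc_mult_mat_vec)
  moreover have "Phi1 *\<^sub>v z = transpose_mat (cols_first k U) *\<^sub>v (Phi *\<^sub>v z)"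
    using Phi_carrier U_carrier z by (intro assoc_mult_mat_vec) (auto simp: cols_first_def)
  moreover have "Phi *\<^sub>v z \<in> carrier_vec m" using Phi_carrier z by simp
  ultimately show ?thesis
    using transpose_cols_first_mult_vec_index[OF U_carrier _ l, of "Phi *\<^sub>v z"] k_less_n tall
    unfolding z_def by simp
qed

lemma Phi_coords_pinv_tail:
  assumes xs: "xs \<in> carrier_vec k"
  shows "(\<Sum>l\<in>{k..<m}. (Phi_coords (pinv Phi1 *\<^sub>v xs) $ l)^2) \<le> g^2 * (xs \<bullet> xs)"
proof -
  define z where "z = pinv Phi1 *\<^sub>v xs"
  have z: "z \<in> carrier_vec d" unfolding z_def using pinv_Phi1_carrier xs by simp
  have "Phi2 *\<^sub>v z = (Phi2 * pinv Phi1) *\<^sub>v xs"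
    unfolding z_def using pinv_Phi1_carrier xs Phi2_carrier by (simp add: assoc_mult_mat_vec)
  then have "vnorm (Phi2 *\<^sub>v z) \<le> g * vnorm xs"
    using vnorm_mult_vec_le_norm2[of "Phi2 * pinv Phi1" "m-k" k xs] Phi2_carrier pinv_Phi1_carrier xs
    by simp
  then have "(vnorm (Phi2 *\<^sub>v z))^2 \<le> (g * vnorm xs)^2" using vnorm_nonneg by (intro power_mono) auto
  then have "(Phi2 *\<^sub>v z) \<bullet> (Phi2 *\<^sub>v z) \<le> g^2 * (xs \<bullet> xs)"
    unfolding vnorm_def using scalar_prod_self_nonneg by (simp add: power_mult_distrib)
  moreover have "Phi2 *\<^sub>v z = transpose_mat (cols_rest k U) *\<^sub>v (Phi *\<^sub>v z)"
    using Phi_carrier U_carrier z by (intro assoc_mult_mat_vec) (auto simp: cols_rest_def)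
  ultimately show ?thesis
    using sum_sq_transpose_mult_vec_tail[OF U_carrier _, of "Phi *\<^sub>v z" k] Phi_carrier z k_less_n tall
    unfolding z_def by simp
qed

text \<open>The witness is \<open>z = Phi1\<^sup>\<dagger> \<Sigma>\<^sub>k\<^sup>-\<^sup>e x\<close>.\<close>

lemma head_matching_sketch_exists:
  fixes x :: "real vec"
  assumes i: "i < k" and x: "x \<in> carrier_vec k" and sup: "\<forall>l. i < l \<and> l < k \<longrightarrow> x $ l = 0"
  shows "\<exists>z\<in>carrier_vec d. (\<forall>l<k. S $$ (l,l) ^ e * Phi_coords z $ l = x $ l) \<and>
     (\<Sum>l\<in>{k..<n}. (S $$ (l,l) ^ e * Phi_coords z $ l)^2) \<le> (\<delta> i ^ e * g)^2 * (x \<bullet> x)"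
proof -
  define xs where "xs = vec k (\<lambda>l. x $ l / S $$ (l,l) ^ e)"
  have xs: "xs \<in> carrier_vec k" unfolding xs_def by simp
  define z where "z = pinv Phi1 *\<^sub>v xs"
  have z: "z \<in> carrier_vec d" unfolding z_def using pinv_Phi1_carrier xs by simp
  have head: "S $$ (l,l) ^ e * Phi_coords z $ l = x $ l" if l: "l < k" for l
    using Phi_coords_pinv_head[OF xs l] sv_pos[OF l] l unfolding z_def xs_def by simp
  have "xs \<bullet> xs = (\<Sum>l<k. (x $ l / S $$ (l,l) ^ e)^2)"
    using scalar_prod_self_eq_sum_squares[of xs] unfolding xs_def by simp
  then have "xs \<bullet> xs \<le> (x \<bullet> x) / (S $$ (i,i) ^ e)^2"
    using head_sum_sq_div_sv_pow_le[OF i _ sv_pos[OF i] x sup] k_less_n by simp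
  then have "(\<Sum>l\<in>{k..<m}. (Phi_coords z $ l)^2) \<le> g^2 * ((x \<bullet> x) / (S $$ (i,i) ^ e)^2)"
    unfolding z_def by (rule order_trans[OF Phi_coords_pinv_tail[OF xs] mult_left_mono[OF _ zero_le_power2]])
  then have "(\<Sum>l\<in>{k..<n}. (S $$ (l,l) ^ e * Phi_coords z $ l)^2)
      \<le> (S $$ (k,k) ^ e)^2 * (g^2 * ((x \<bullet> x) / (S $$ (i,i) ^ e)^2))"
    by (rule order_trans[OF tail_sum_sq_sv_scale_le[OF k_less_n] mult_left_mono[OF _ zero_le_power2]])
  also have "\<dots> = (\<delta> i ^ e * g)^2 * (x \<bullet> x)"
    using sv_pos[OF i] by (simp add: power_divide power_mult_distrib field_simps)
  finally show ?thesis using head z by blast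
qed

lemma principal_angle_sine_le_sketch:
  fixes X Y :: "real mat"
  assumes X: "X \<in> carrier_mat N dX" "orth_cols X" and Y: "Y \<in> carrier_mat N N" "orth_cols Y"
    and kN: "k \<le> N" and i: "i < k" and pa: "principal_angle_sines X (cols_first k Y) t"
    and witness: "\<And>z. z \<in> carrier_vec d \<Longrightarrow> \<exists>r\<in>carrier_vec N. Y *\<^sub>v r \<in> range_mat X \<and>
       (\<forall>l<k. r $ l = S $$ (l,l) ^ e * Phi_coords z $ l) \<and>
       (\<Sum>l\<in>{k..<N}. (r $ l)^2) \<le> (\<Sum>l\<in>{k..<n}. (S $$ (l,l) ^ e * Phi_coords z $ l)^2)"
  shows "t i \<le> \<delta> i ^ e * g / sqrt (1 + \<delta> i ^ (2*e) * g^2)"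
proof -
  have tau: "\<delta> i ^ e * g \<ge> 0"
    using sv_pos[OF i] sv_nonneg[of k] k_less_n g_nonneg by simp
  have "t i \<le> \<delta> i ^ e * g / sqrt (1 + (\<delta> i ^ e * g)^2)"
  proof (rule principal_angle_sine_le[OF X Y kN i tau _ pa])
    fix x :: "real vec" assume x: "x \<in> carrier_vec k" and sup: "\<forall>l. i < l \<and> l < k \<longrightarrow> x $ l = 0"
    obtain z where "z \<in> carrier_vec d" and z: "\<forall>l<k. S $$ (l,l) ^ e * Phi_coords z $ l = x $ l"
      "(\<Sum>l\<in>{k..<n}. (S $$ (l,l) ^ e * Phi_coords z $ l)^2) \<le> (\<delta> i ^ e * g)^2 * (x \<bullet> x)"
      using head_matching_sketch_exists[OF i x sup] by blast
    with witness obtain r where "r \<in> carrier_vec N" "Y *\<^sub>v r \<in> range_mat X"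
      "\<forall>l<k. r $ l = S $$ (l,l) ^ e * Phi_coords z $ l"
      "(\<Sum>l\<in>{k..<N}. (r $ l)^2) \<le> (\<Sum>l\<in>{k..<n}. (S $$ (l,l) ^ e * Phi_coords z $ l)^2)"
      by blast
    with z show "\<exists>r\<in>carrier_vec N. Y *\<^sub>v r \<in> range_mat X \<and> (\<forall>l<k. r $ l = x $ l) \<and>
        (\<Sum>l\<in>{k..<N}. (r $ l)^2) \<le> (\<delta> i ^ e * g)^2 * (x \<bullet> x)" by force
  qed
  then show ?thesis by (simp add: power_mult_distrib power_mult[symmetric] mult.commute)
qed

lemma sketch_in_range_Pbar:
  assumes z: "z \<in> carrier_vec d"
  shows "V *\<^sub>v sv_scale (2*q+1) (Phi_coords z) \<in> range_mat Pbar"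
proof -
  have "(transpose_mat A * A) ^\<^sub>m q * transpose_mat A * Phi \<in> carrier_mat n d"
    using pow_carrier_mat[of "transpose_mat A * A" n q] A_carrier Phi_carrier by (intro mult_carrier_mat) auto
  then have "((transpose_mat A * A) ^\<^sub>m q * transpose_mat A * Phi) *\<^sub>v z
      \<in> range_mat ((transpose_mat A * A) ^\<^sub>m q * transpose_mat A * Phi)"
    unfolding range_mat_def using z Phi_carrier by auto
  then show ?thesis using Pbar_range sketch_mult_vec[OF Phi_carrier z] by simp
qed

lemma sine_Q_Uk_le:
  assumes pa: "principal_angle_sines Q (cols_first k U) t" and i: "i < k"
  shows "t i \<le> \<delta> i ^ (2*q+2) * g / sqrt (1 + \<delta> i ^ (4*q+4) * g^2)"
proof -
  have e: "2*(2*q+2) = 4*q+(4::nat)" by simp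
  have "t i \<le> \<delta> i ^ (2*q+2) * g / sqrt (1 + \<delta> i ^ (2*(2*q+2)) * g^2)"
  proof (rule principal_angle_sine_le_sketch[OF Q_carrier Q_orth U_carrier U_orth _ i pa])
    show "k \<le> m" using k_less_n tall by simp
    fix z :: "real vec" assume z: "z \<in> carrier_vec d"
    define y where "y = sv_scale (2*q+1) (Phi_coords z)"
    have y: "y \<in> carrier_vec n" unfolding y_def by (rule sv_scale_carrier)
    have r: "(S *\<^sub>v y) $ l = (if l < n then S $$ (l,l) ^ (2*q+2) * Phi_coords z $ l else 0)"
      if "l < m" for l
      using diag_mult_vec_index[OF S_carrier S_diag y that] unfolding y_def sv_scale_def by auto
    obtain v where v: "v \<in> carrier_vec d" "V *\<^sub>v y = Pbar *\<^sub>v v"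
      using sketch_in_range_Pbar[OF z, folded y_def] Pbar_carrier unfolding range_mat_def by auto
    have "U *\<^sub>v (S *\<^sub>v y) = (A * Pbar) *\<^sub>v v"
      using A_mult_V_mult_vec[OF y] v A_carrier Pbar_carrier by (simp add: assoc_mult_mat_vec)
    also have "\<dots> = Q *\<^sub>v (R *\<^sub>v v)"
      unfolding A_Pbar_eq using Q_carrier R_carrier v by (simp add: assoc_mult_mat_vec)
    finally have "U *\<^sub>v (S *\<^sub>v y) \<in> range_mat Q" unfolding range_mat_def using Q_carrier R_carrier v by auto
    moreover have "(\<Sum>l\<in>{k..<m}. ((S *\<^sub>v y) $ l)^2) = (\<Sum>l\<in>{k..<n}. (S $$ (l,l) ^ (2*q+2) * Phi_coords z $ l)^2)"
    proof -
      have "(\<Sum>l\<in>{k..<m}. ((S *\<^sub>v y) $ l)^2) = (\<Sum>l\<in>{k..<n}. ((S *\<^sub>v y) $ l)^2) + (\<Sum>l\<in>{n..<m}. ((S *\<^sub>v y) $ l)^2)"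
        using k_less_n tall by (simp add: sum.atLeastLessThan_concat)
      also have "(\<Sum>l\<in>{n..<m}. ((S *\<^sub>v y) $ l)^2) = 0" using r by simp
      finally show ?thesis using r tall by simp
    qed
    ultimately show "\<exists>r\<in>carrier_vec m. U *\<^sub>v r \<in> range_mat Q \<and>
        (\<forall>l<k. r $ l = S $$ (l,l) ^ (2*q+2) * Phi_coords z $ l) \<and>
        (\<Sum>l\<in>{k..<m}. (r $ l)^2) \<le> (\<Sum>l\<in>{k..<n}. (S $$ (l,l) ^ (2*q+2) * Phi_coords z $ l)^2)"
      using r S_carrier y k_less_n tall by (intro bexI[of _ "S *\<^sub>v y"]) auto
  qed
  then show ?thesis unfolding e .
qed

lemma sine_P_Vk_le:
  assumes pa: "principal_angle_sines (Pbar * Ptil) (cols_first k V) t" and i: "i < k"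
  shows "t i \<le> \<delta> i ^ (2*q+1) * g / sqrt (1 + \<delta> i ^ (4*q+2) * g^2)"
proof -
  have e: "2*(2*q+1) = 4*q+(2::nat)" by simp
  have P: "Pbar * Ptil \<in> carrier_mat n d" "orth_cols (Pbar * Ptil)"
    using Pbar_carrier Ptil_carrier orth_cols_mult[OF Pbar_carrier Pbar_orth Ptil_carrier Ptil_orth]
    by auto
  have "t i \<le> \<delta> i ^ (2*q+1) * g / sqrt (1 + \<delta> i ^ (2*(2*q+1)) * g^2)"
  proof (rule principal_angle_sine_le_sketch[OF P V_carrier V_orth _ i pa])
    show "k \<le> n" using k_less_n by simp
    fix z :: "real vec" assume z: "z \<in> carrier_vec d"
    have "V *\<^sub>v sv_scale (2*q+1) (Phi_coords z) \<in> range_mat (Pbar * Ptil)"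
      using sketch_in_range_Pbar[OF z] range_mat_subset_mult_orthogonal[OF Pbar_carrier Ptil_carrier Ptil_orth]
      by blast
    moreover have "\<forall>l<k. sv_scale (2*q+1) (Phi_coords z) $ l = S $$ (l,l) ^ (2*q+1) * Phi_coords z $ l"
      using k_less_n by (simp add: sv_scale_def)
    moreover have "(\<Sum>l\<in>{k..<n}. (sv_scale (2*q+1) (Phi_coords z) $ l)^2)
        \<le> (\<Sum>l\<in>{k..<n}. (S $$ (l,l) ^ (2*q+1) * Phi_coords z $ l)^2)"
      by (intro sum_mono) (simp add: sv_scale_def)
    ultimately show "\<exists>r\<in>carrier_vec n. V *\<^sub>v r \<in> range_mat (Pbar * Ptil) \<and>
        (\<forall>l<k. r $ l = S $$ (l,l) ^ (2*q+1) * Phi_coords z $ l) \<and>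
        (\<Sum>l\<in>{k..<n}. (r $ l)^2) \<le> (\<Sum>l\<in>{k..<n}. (S $$ (l,l) ^ (2*q+1) * Phi_coords z $ l)^2)"
      using sv_scale_carrier by blast
  qed
  then show ?thesis unfolding e .
qed

end

theorem theorem2:
  fixes A U S V Phi Pbar Q R Ptil Rtil :: "real mat" and m n k p d q :: nat
  assumes A_dim: "A \<in> carrier_mat m n" and mn: "n \<le> m"
    and svd: "is_svd A U S V"
    and k1: "k \<ge> 1" and sk: "S $$ (k-1,k-1) > 0"
    and p1: "p \<ge> 1" and d_def: "d = k + p" and dn: "d < n"
    and Phi_dim: "Phi \<in> carrier_mat m d"
    and Pbar_dim: "Pbar \<in> carrier_mat n d" and Pbar_orth: "orth_cols Pbar"
    and Pbar_range: "range_mat Pbar =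
          range_mat ((transpose_mat A * A) ^\<^sub>m q * transpose_mat A * Phi)"
    and Pbar_rank: "vec_space.rank n ((transpose_mat A * A) ^\<^sub>m q * transpose_mat A * Phi) = d"
    and Q_dim: "Q \<in> carrier_mat m d" and Q_orth: "orth_cols Q"
    and R_dim: "R \<in> carrier_mat d d" and R_ut: "upper_triangular R"
    and QR: "A * Pbar = Q * R"
    and Ptil_dim: "Ptil \<in> carrier_mat d d" and Ptil_orth: "orth_cols Ptil"
    and Rtil_dim: "Rtil \<in> carrier_mat d d" and Rtil_ut: "upper_triangular Rtil"
    and QR2: "transpose_mat R = Ptil * Rtil"
    and Phi1_rank: "vec_space.rank k (transpose_mat (cols_first k U) * Phi) = k"
  shows
    "let Uk = cols_first k U; Vk = cols_first k V;
         Phi1 = transpose_mat Uk * Phi;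
         Phi2 = transpose_mat (cols_rest k U) * Phi;
         g = norm2 (Phi2 * pinv Phi1);
         P = Pbar * Ptil;
         \<delta> = (\<lambda>i. S $$ (k,k) / S $$ (i,i))
     in (\<forall>t. principal_angle_sines Q Uk t \<longrightarrow>
           (\<forall>i<k. t i \<le> \<delta> i ^ (2*q+2) * g / sqrt (1 + \<delta> i ^ (4*q+4) * g\<^sup>2)))
      \<and> (\<forall>t. principal_angle_sines P Vk t \<longrightarrow>
           (\<forall>i<k. t i \<le> \<delta> i ^ (2*q+1) * g / sqrt (1 + \<delta> i ^ (4*q+2) * g\<^sup>2)))"
proof -
  interpret ru_qlp A U S V m n k q d Phi Pbar Q R Ptil
    using A_dim mn svd sk Phi_dim Pbar_dim Pbar_orth Pbar_range Q_dim Q_orth R_dim QR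
      Ptil_dim Ptil_orth Phi1_rank d_def p1 dn
    by unfold_locales auto
  show ?thesis unfolding Let_def using sine_Q_Uk_le sine_P_Vk_le by auto
qed

end
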